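(* Let $K$ be an infinite field and let $f_1,\dots,f_r \in K[x_1,\dots,x_n]$ be homogeneous polynomials, where $f_1$ has degree $d\ge 1$ and its support contains $x_i^d$ for some $i$. Let $Z \subseteq \mathbb{A}^n$ be the closed subscheme defined by the ideal generated by $S_n.f_1 \cup \dots \cup S_n.f_r$. Then for general coefficients of $f_1$ with respect to its support, $Z$ is set-theoretically equal to $\{0\}$ (i.e., the radical of its defining ideal contains $(x_1,\dots,x_n)$), and the corresponding subscheme of $\mathbb{P}^{n-1}$ is empty.
   Context: $S_n$ acts on $K[x_1,\dots,x_n]$ by permuting the variables, $\sigma.x_i = x_{\sigma(i)}$, and $S_n.f$ denotes the orbit of $f$. The support of a polynomial is its set of monomials with nonzero coefficient. "For general coefficients of $f_1$ with respect to its support $\mathcal{A}$" means: the set of polynomials with support contained in $\mathcal{A}$ for which the assertion holds contains a non-empty Zariski-open subset of $K^{\mathcal{A}}$ (the space of such coefficient vectors). *)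

theory Defs
  imports Main "HOL-Library.Poly_Mapping" "HOL-Combinatorics.Permutations"
begin

text \<open>Variables are indexed 0,1,2,...; the polynomial ring K[x_1..x_n] consists of the
polynomials all of whose monomials only involve variables with index < n.\<close>

type_synonym monom = "nat \<Rightarrow>\<^sub>0 nat"
type_synonym 'a mpoly = "monom \<Rightarrow>\<^sub>0 'a"

definition mon_vars_in :: "nat \<Rightarrow> monom \<Rightarrow> bool" where
  "mon_vars_in n \<alpha> \<longleftrightarrow> (\<forall>j\<in>Poly_Mapping.keys \<alpha>. j < n)"

definition poly_vars_in :: "nat \<Rightarrow> 'a::zero mpoly \<Rightarrow> bool" where
  "poly_vars_in n p \<longleftrightarrow> (\<forall>\<alpha>\<in>Poly_Mapping.keys p. mon_vars_in n \<alpha>)"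

definition support :: "'a::zero mpoly \<Rightarrow> monom set" where
  "support p = Poly_Mapping.keys p"

definition mdeg :: "monom \<Rightarrow> nat" where
  "mdeg \<alpha> = (\<Sum>j\<in>Poly_Mapping.keys \<alpha>. Poly_Mapping.lookup \<alpha> j)"

definition homogeneous :: "nat \<Rightarrow> 'a::zero mpoly \<Rightarrow> bool" where
  "homogeneous d p \<longleftrightarrow> (\<forall>\<alpha>\<in>Poly_Mapping.keys p. mdeg \<alpha> = d)"

definition Var :: "nat \<Rightarrow> 'a::{zero,one} mpoly" where
  "Var j = Poly_Mapping.single (Poly_Mapping.single j 1) 1"

definition Mon :: "monom \<Rightarrow> 'a::zero \<Rightarrow> 'a mpoly" where
  "Mon \<alpha> c = Poly_Mapping.single \<alpha> c"

definition perm_act :: "(nat \<Rightarrow> nat) \<Rightarrow> 'a::comm_ring_1 mpoly \<Rightarrow> 'a mpoly" where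
  "perm_act \<sigma> p = (\<Sum>\<alpha>\<in>Poly_Mapping.keys p. Mon 0 (Poly_Mapping.lookup p \<alpha>) * (\<Prod>j\<in>Poly_Mapping.keys \<alpha>. Var (\<sigma> j) ^ Poly_Mapping.lookup \<alpha> j))"

definition orbit :: "nat \<Rightarrow> 'a::comm_ring_1 mpoly \<Rightarrow> 'a mpoly set" where
  "orbit n f = {perm_act \<sigma> f | \<sigma>. \<sigma> permutes {..<n}}"

definition ideal_gen :: "nat \<Rightarrow> 'a::comm_ring_1 mpoly set \<Rightarrow> 'a mpoly set" where
  "ideal_gen n G = {(\<Sum>g\<in>F. h g * g) | F h. finite F \<and> F \<subseteq> G \<and> (\<forall>g\<in>F. poly_vars_in n (h g))}"

definition radical_contains_irrelevant :: "nat \<Rightarrow> 'a::comm_ring_1 mpoly set \<Rightarrow> bool" where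
  "radical_contains_irrelevant n I \<longleftrightarrow> (\<forall>j<n. \<exists>k. Var j ^ k \<in> I)"

text \<open>Coefficient space K^A: a point is a function c on monomials (only values on A matter).
Polynomial functions on K^A are polynomials whose variables are indexed by monomials in A.\<close>
definition coord_poly_in :: "monom set \<Rightarrow> ((monom \<Rightarrow>\<^sub>0 nat) \<Rightarrow>\<^sub>0 'a::zero) \<Rightarrow> bool" where
  "coord_poly_in A g \<longleftrightarrow> (\<forall>\<mu>\<in>Poly_Mapping.keys g. Poly_Mapping.keys \<mu> \<subseteq> A)"

definition coord_eval :: "((monom \<Rightarrow>\<^sub>0 nat) \<Rightarrow>\<^sub>0 'a::comm_ring_1) \<Rightarrow> (monom \<Rightarrow> 'a) \<Rightarrow> 'a" where
  "coord_eval g c = (\<Sum>\<mu>\<in>Poly_Mapping.keys g. Poly_Mapping.lookup g \<mu> * (\<Prod>v\<in>Poly_Mapping.keys \<mu>. c v ^ Poly_Mapping.lookup \<mu> v))"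

text \<open>A property P of coefficient vectors holds for general coefficients on A: the set where
it holds contains a nonempty Zariski-open subset of K^A; equivalently it contains a nonempty
basic open set D(g) = {c. g(c) \<noteq> 0}.\<close>
definition holds_generally :: "monom set \<Rightarrow> ((monom \<Rightarrow> 'a::comm_ring_1) \<Rightarrow> bool) \<Rightarrow> bool" where
  "holds_generally A P \<longleftrightarrow>
     (\<exists>g. coord_poly_in A g \<and> (\<exists>c. coord_eval g c \<noteq> 0) \<and> (\<forall>c. coord_eval g c \<noteq> 0 \<longrightarrow> P c))"

definition poly_of_coeffs :: "monom set \<Rightarrow> (monom \<Rightarrow> 'a::comm_ring_1) \<Rightarrow> 'a mpoly" where
  "poly_of_coeffs A c = (\<Sum>\<alpha>\<in>A. Mon \<alpha> (c \<alpha>))"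

end

theory Submission
  imports Defs "Jordan_Normal_Form.Determinant"
begin

text \<open>Let \<open>D = n(d - 1) + 1\<close>. Every monomial \<open>m\<close> of degree \<open>D\<close> in \<open>n\<close> variables is divisible
by some \<open>x\<^sub>j\<^sup>d\<close>; write \<open>m = x\<^sub>j\<^sup>d u\<^sub>m\<close> and let \<open>\<sigma>\<^sub>m\<close> be the transposition of \<open>i\<close> and \<open>j\<close>.
The polynomials \<open>u\<^sub>m \<sigma>\<^sub>m(f\<^sub>1)\<close> lie in the ideal and are homogeneous of degree \<open>D\<close>. The
determinant of their coefficient matrix with respect to the monomials of degree \<open>D\<close> is a
polynomial in the coefficients of \<open>f\<^sub>1\<close>, and it equals 1 at \<open>f\<^sub>1 = x\<^sub>i\<^sup>d\<close>, where the matrix is the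
identity. Wherever it does not vanish, every monomial of degree \<open>D\<close>, in particular every
\<open>x\<^sub>j\<^sup>D\<close>, is a linear combination of the \<open>u\<^sub>m \<sigma>\<^sub>m(f\<^sub>1)\<close>.\<close>

section \<open>Polynomial functions on the coefficient space\<close>

definition coord_monom_eval :: "(monom \<Rightarrow>\<^sub>0 nat) \<Rightarrow> (monom \<Rightarrow> 'a::comm_ring_1) \<Rightarrow> 'a" where
  "coord_monom_eval \<mu> c = (\<Prod>v\<in>Poly_Mapping.keys \<mu>. c v ^ Poly_Mapping.lookup \<mu> v)"

lemma coord_monom_eval_superset:
  assumes "finite S" "Poly_Mapping.keys \<mu> \<subseteq> S"
  shows "coord_monom_eval \<mu> c = (\<Prod>v\<in>S. c v ^ Poly_Mapping.lookup \<mu> v)"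
  unfolding coord_monom_eval_def
  by (rule prod.mono_neutral_left) (auto simp: assms in_keys_iff)

lemma coord_monom_eval_add: "coord_monom_eval (\<mu> + \<nu>) c = coord_monom_eval \<mu> c * coord_monom_eval \<nu> c"
proof -
  let ?S = "Poly_Mapping.keys \<mu> \<union> Poly_Mapping.keys \<nu>"
  have "coord_monom_eval (\<mu> + \<nu>) c = (\<Prod>v\<in>?S. c v ^ Poly_Mapping.lookup (\<mu> + \<nu>) v)"
    by (rule coord_monom_eval_superset) (auto simp: keys_add)
  also have "\<dots> = (\<Prod>v\<in>?S. c v ^ Poly_Mapping.lookup \<mu> v) * (\<Prod>v\<in>?S. c v ^ Poly_Mapping.lookup \<nu> v)"
    by (simp add: lookup_add power_add prod.distrib)
  also have "\<dots> = coord_monom_eval \<mu> c * coord_monom_eval \<nu> c"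
    by (subst (1 2) coord_monom_eval_superset[of ?S]) auto
  finally show ?thesis .
qed

lemma coord_eval_superset:
  assumes "finite S" "Poly_Mapping.keys g \<subseteq> S"
  shows "coord_eval g c = (\<Sum>\<mu>\<in>S. Poly_Mapping.lookup g \<mu> * coord_monom_eval \<mu> c)"
  unfolding coord_eval_def coord_monom_eval_def[symmetric]
  by (rule sum.mono_neutral_left) (auto simp: assms in_keys_iff)

lemma coord_eval_add: "coord_eval (g + h) c = coord_eval g c + coord_eval h c"
proof -
  let ?S = "Poly_Mapping.keys g \<union> Poly_Mapping.keys h"
  have "coord_eval (g + h) c = (\<Sum>\<mu>\<in>?S. Poly_Mapping.lookup (g + h) \<mu> * coord_monom_eval \<mu> c)"
    by (rule coord_eval_superset) (auto simp: keys_add)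
  also have "\<dots> = (\<Sum>\<mu>\<in>?S. Poly_Mapping.lookup g \<mu> * coord_monom_eval \<mu> c)
                + (\<Sum>\<mu>\<in>?S. Poly_Mapping.lookup h \<mu> * coord_monom_eval \<mu> c)"
    by (simp add: lookup_add distrib_right sum.distrib)
  also have "\<dots> = coord_eval g c + coord_eval h c"
    by (subst (1 2) coord_eval_superset[of ?S]) auto
  finally show ?thesis .
qed

lemma coord_eval_zero [simp]: "coord_eval 0 c = 0"
  by (simp add: coord_eval_def)

lemma coord_eval_sum: "coord_eval (\<Sum>i\<in>I. G i) c = (\<Sum>i\<in>I. coord_eval (G i) c)"
  by (induction I rule: infinite_finite_induct) (auto simp: coord_eval_add)

lemma coord_eval_single: "coord_eval (Poly_Mapping.single \<mu> a) c = a * coord_monom_eval \<mu> c"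
  by (simp add: coord_eval_def coord_monom_eval_def)

lemma poly_mapping_sum_singles:
  "(g :: 'b \<Rightarrow>\<^sub>0 'c::comm_monoid_add) =
     (\<Sum>\<mu>\<in>Poly_Mapping.keys g. Poly_Mapping.single \<mu> (Poly_Mapping.lookup g \<mu>))"
  by (rule poly_mapping_eqI) (simp add: lookup_sum lookup_single when_def in_keys_iff)

lemma coord_eval_mult: "coord_eval (g * h) c = coord_eval g c * coord_eval h c"
proof -
  have "g * h = (\<Sum>\<mu>\<in>Poly_Mapping.keys g. \<Sum>\<nu>\<in>Poly_Mapping.keys h.
       Poly_Mapping.single (\<mu> + \<nu>) (Poly_Mapping.lookup g \<mu> * Poly_Mapping.lookup h \<nu>))"
    by (subst (1) poly_mapping_sum_singles[of g], subst (1) poly_mapping_sum_singles[of h])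
      (simp add: sum_distrib_left sum_distrib_right mult_single sum.swap[of _ "Poly_Mapping.keys h"])
  then have "coord_eval (g * h) c = (\<Sum>\<mu>\<in>Poly_Mapping.keys g. \<Sum>\<nu>\<in>Poly_Mapping.keys h.
       Poly_Mapping.lookup g \<mu> * Poly_Mapping.lookup h \<nu> * (coord_monom_eval \<mu> c * coord_monom_eval \<nu> c))"
    by (simp add: coord_eval_sum coord_eval_single coord_monom_eval_add)
  also have "\<dots> = coord_eval g c * coord_eval h c"
    unfolding coord_eval_def coord_monom_eval_def[symmetric] sum_product
    by (intro sum.cong refl) (simp add: mult_ac)
  finally show ?thesis .
qed

definition coord_poly_fun :: "monom set \<Rightarrow> ((monom \<Rightarrow> 'a::comm_ring_1) \<Rightarrow> 'a) \<Rightarrow> bool" where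
  "coord_poly_fun A F \<longleftrightarrow> (\<exists>g. coord_poly_in A g \<and> (\<forall>c. coord_eval g c = F c))"

lemma coord_poly_fun_const: "coord_poly_fun A (\<lambda>c. k)"
  unfolding coord_poly_fun_def
  by (rule exI[of _ "Poly_Mapping.single 0 k"]) (auto simp: coord_poly_in_def coord_eval_single coord_monom_eval_def)

lemma coord_poly_fun_coord: "\<alpha> \<in> A \<Longrightarrow> coord_poly_fun A (\<lambda>c. c \<alpha>)"
  unfolding coord_poly_fun_def
  by (rule exI[of _ "Poly_Mapping.single (Poly_Mapping.single \<alpha> 1) 1"])
    (auto simp: coord_poly_in_def coord_eval_single coord_monom_eval_def)

lemma coord_poly_in_add: "coord_poly_in A g \<Longrightarrow> coord_poly_in A h \<Longrightarrow> coord_poly_in A (g + h)"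
  unfolding coord_poly_in_def using keys_add[of g h] by blast

lemma coord_poly_in_mult:
  assumes "coord_poly_in A g" "coord_poly_in A h"
  shows "coord_poly_in A (g * h)"
  unfolding coord_poly_in_def
proof
  fix \<mu> assume "\<mu> \<in> Poly_Mapping.keys (g * h)"
  then obtain a b where "\<mu> = a + b" "a \<in> Poly_Mapping.keys g" "b \<in> Poly_Mapping.keys h"
    using keys_mult by blast
  then show "Poly_Mapping.keys \<mu> \<subseteq> A"
    using assms keys_add[of a b] unfolding coord_poly_in_def by blast
qed

lemma coord_poly_fun_add:
  "coord_poly_fun A F \<Longrightarrow> coord_poly_fun A G \<Longrightarrow> coord_poly_fun A (\<lambda>c. F c + G c)"
  unfolding coord_poly_fun_def by (metis coord_poly_in_add coord_eval_add)

lemma coord_poly_fun_mult: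
  "coord_poly_fun A F \<Longrightarrow> coord_poly_fun A G \<Longrightarrow> coord_poly_fun A (\<lambda>c. F c * G c)"
  unfolding coord_poly_fun_def by (metis coord_poly_in_mult coord_eval_mult)

lemma coord_poly_fun_sum:
  "(\<And>i. i \<in> I \<Longrightarrow> coord_poly_fun A (G i)) \<Longrightarrow> coord_poly_fun A (\<lambda>c. \<Sum>i\<in>I. G i c)"
  by (induction I rule: infinite_finite_induct) (auto intro: coord_poly_fun_const coord_poly_fun_add)

lemma coord_poly_fun_prod:
  "(\<And>i. i \<in> I \<Longrightarrow> coord_poly_fun A (G i)) \<Longrightarrow> coord_poly_fun A (\<lambda>c. \<Prod>i\<in>I. G i c)"
  by (induction I rule: infinite_finite_induct) (auto intro: coord_poly_fun_const coord_poly_fun_mult)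

lemma coord_poly_fun_if:
  "coord_poly_fun A F \<Longrightarrow> coord_poly_fun A G \<Longrightarrow> coord_poly_fun A (\<lambda>c. if P then F c else G c)"
  by (cases P) simp_all

lemma coord_poly_fun_det:
  assumes "\<And>c. M c \<in> carrier_mat N N"
    and "\<And>a b. a < N \<Longrightarrow> b < N \<Longrightarrow> coord_poly_fun A (\<lambda>c. M c $$ (a, b))"
  shows "coord_poly_fun A (\<lambda>c. det (M c))"
proof -
  have "coord_poly_fun A (\<lambda>c. \<Sum>p\<in>{p. p permutes {0..<N}}. of_int (signof p) * (\<Prod>a = 0..<N. M c $$ (a, p a)))"
    using assms(2) permutes_in_image
    by (intro coord_poly_fun_sum coord_poly_fun_mult coord_poly_fun_const coord_poly_fun_prod) fastforce
  then show ?thesis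
    by (simp add: det_def'[OF assms(1)])
qed

lemma holds_generally_if_coord_poly_fun:
  assumes "coord_poly_fun A F" "F c\<^sub>0 \<noteq> 0" "\<And>c. F c \<noteq> 0 \<Longrightarrow> P c"
  shows "holds_generally A P"
  using assms unfolding coord_poly_fun_def holds_generally_def by metis

lemma holds_generally_mono:
  "holds_generally A P \<Longrightarrow> (\<And>c. P c \<Longrightarrow> Q c) \<Longrightarrow> holds_generally A Q"
  unfolding holds_generally_def by blast

section \<open>Monomials and the permutation action\<close>

lemma mdeg_superset:
  assumes "finite S" "Poly_Mapping.keys \<alpha> \<subseteq> S"
  shows "mdeg \<alpha> = (\<Sum>j\<in>S. Poly_Mapping.lookup \<alpha> j)"
  unfolding mdeg_def by (rule sum.mono_neutral_left) (auto simp: assms in_keys_iff)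

lemma mdeg_add: "mdeg (\<alpha> + \<beta>) = mdeg \<alpha> + mdeg \<beta>"
proof -
  let ?S = "Poly_Mapping.keys \<alpha> \<union> Poly_Mapping.keys \<beta>"
  have "mdeg (\<alpha> + \<beta>) = (\<Sum>j\<in>?S. Poly_Mapping.lookup (\<alpha> + \<beta>) j)"
    by (rule mdeg_superset) (auto simp: keys_add)
  also have "\<dots> = (\<Sum>j\<in>?S. Poly_Mapping.lookup \<alpha> j) + (\<Sum>j\<in>?S. Poly_Mapping.lookup \<beta> j)"
    by (simp add: lookup_add sum.distrib)
  also have "\<dots> = mdeg \<alpha> + mdeg \<beta>"
    by (subst (1 2) mdeg_superset[of ?S]) auto
  finally show ?thesis .
qed

lemma mdeg_single [simp]: "mdeg (Poly_Mapping.single j k) = k"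
  by (simp add: mdeg_def)

lemma mdeg_zero [simp]: "mdeg 0 = 0"
  by (simp add: mdeg_def)

lemma mdeg_sum: "mdeg (\<Sum>i\<in>I. \<alpha> i) = (\<Sum>i\<in>I. mdeg (\<alpha> i))"
  by (induction I rule: infinite_finite_induct) (simp_all add: mdeg_add)

lemma lookup_le_mdeg: "Poly_Mapping.lookup \<alpha> j \<le> mdeg \<alpha>"
  unfolding mdeg_def
  by (cases "j \<in> Poly_Mapping.keys \<alpha>") (auto intro: member_le_sum simp: in_keys_iff)

lemma mon_vars_in_add: "mon_vars_in n \<alpha> \<Longrightarrow> mon_vars_in n \<beta> \<Longrightarrow> mon_vars_in n (\<alpha> + \<beta>)"
  unfolding mon_vars_in_def using keys_add[of \<alpha> \<beta>] by auto

lemma finite_monomials_of_degree: "finite {\<alpha>. mon_vars_in n \<alpha> \<and> mdeg \<alpha> = k}"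
proof -
  let ?M = "{\<alpha>. mon_vars_in n \<alpha> \<and> mdeg \<alpha> = k}"
  let ?exps = "\<lambda>\<alpha>. map (Poly_Mapping.lookup \<alpha>) [0..<n]"
  have "inj_on ?exps ?M"
  proof (rule inj_onI, rule poly_mapping_eqI)
    fix \<alpha> \<beta> j assume \<alpha>: "\<alpha> \<in> ?M" and \<beta>: "\<beta> \<in> ?M" and eq: "?exps \<alpha> = ?exps \<beta>"
    show "Poly_Mapping.lookup \<alpha> j = Poly_Mapping.lookup \<beta> j"
    proof (cases "j < n")
      case True
      then show ?thesis using eq by (simp add: map_eq_conv)
    next
      case False
      then have "j \<notin> Poly_Mapping.keys \<alpha>" "j \<notin> Poly_Mapping.keys \<beta>"
        using \<alpha> \<beta> unfolding mon_vars_in_def by auto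
      then show ?thesis by (simp add: in_keys_iff)
    qed
  qed
  moreover have "?exps ` ?M \<subseteq> {xs. set xs \<subseteq> {..k} \<and> length xs = n}"
    using lookup_le_mdeg by fastforce
  moreover have "finite {xs. set xs \<subseteq> {..k} \<and> length xs = n}"
    by (rule finite_lists_length_eq) simp
  ultimately show ?thesis
    by (meson finite_imageD finite_subset)
qed

lemma exists_power_factor:
  assumes "mon_vars_in n \<alpha>" "n * (d - 1) < mdeg \<alpha>"
  shows "\<exists>j \<beta>. j < n \<and> mon_vars_in n \<beta> \<and> \<alpha> = Poly_Mapping.single j d + \<beta>"
proof -
  have "\<exists>j. j < n \<and> d \<le> Poly_Mapping.lookup \<alpha> j"
  proof (rule ccontr)
    assume "\<nexists>j. j < n \<and> d \<le> Poly_Mapping.lookup \<alpha> j"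
    then have "\<forall>j\<in>{..<n}. Poly_Mapping.lookup \<alpha> j \<le> d - 1" by auto
    then have "(\<Sum>j\<in>{..<n}. Poly_Mapping.lookup \<alpha> j) \<le> n * (d - 1)"
      using sum_bounded_above[of "{..<n}" "Poly_Mapping.lookup \<alpha>" "d - 1"] by simp
    moreover have "mdeg \<alpha> = (\<Sum>j\<in>{..<n}. Poly_Mapping.lookup \<alpha> j)"
      using assms(1) unfolding mon_vars_in_def by (intro mdeg_superset) auto
    ultimately show False using assms(2) by simp
  qed
  then obtain j where j: "j < n" "d \<le> Poly_Mapping.lookup \<alpha> j" by blast
  define \<beta> where "\<beta> = \<alpha> - Poly_Mapping.single j d"
  have "\<alpha> = Poly_Mapping.single j d + \<beta>"
    using j(2) unfolding \<beta>_def
    by (intro poly_mapping_eqI) (auto simp: lookup_add lookup_minus lookup_single when_def)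
  moreover have "Poly_Mapping.keys \<beta> \<subseteq> Poly_Mapping.keys \<alpha>"
    unfolding \<beta>_def by (auto simp: in_keys_iff lookup_minus)
  then have "mon_vars_in n \<beta>"
    using assms(1) unfolding mon_vars_in_def by auto
  ultimately show ?thesis using j(1) by blast
qed

definition mon_perm :: "(nat \<Rightarrow> nat) \<Rightarrow> monom \<Rightarrow> monom" where
  "mon_perm \<sigma> \<alpha> = (\<Sum>j\<in>Poly_Mapping.keys \<alpha>. Poly_Mapping.single (\<sigma> j) (Poly_Mapping.lookup \<alpha> j))"

lemma mon_perm_single [simp]: "mon_perm \<sigma> (Poly_Mapping.single j k) = Poly_Mapping.single (\<sigma> j) k"
  by (simp add: mon_perm_def)

lemma mdeg_mon_perm [simp]: "mdeg (mon_perm \<sigma> \<alpha>) = mdeg \<alpha>"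
  by (simp only: mon_perm_def mdeg_sum mdeg_single) (simp add: mdeg_def)

lemma mon_vars_in_mon_perm:
  assumes "\<sigma> permutes {..<n}" "mon_vars_in n \<alpha>"
  shows "mon_vars_in n (mon_perm \<sigma> \<alpha>)"
proof -
  have "Poly_Mapping.keys (mon_perm \<sigma> \<alpha>) \<subseteq> \<sigma> ` Poly_Mapping.keys \<alpha>"
    using keys_sum[of "\<lambda>j. Poly_Mapping.single (\<sigma> j) (Poly_Mapping.lookup \<alpha> j)" "Poly_Mapping.keys \<alpha>"]
    unfolding mon_perm_def by (auto split: if_splits)
  then show ?thesis
    using assms permutes_in_image[OF assms(1)] unfolding mon_vars_in_def by fastforce
qed

lemma Var_power: "(Var j :: 'a::comm_ring_1 mpoly) ^ k = Poly_Mapping.single (Poly_Mapping.single j k) 1"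
  by (induction k) (simp_all add: Var_def mult_single single_add[symmetric])

lemma prod_single_one:
  "(\<Prod>j\<in>S. Poly_Mapping.single (f j) (1::'a::comm_ring_1)) = Poly_Mapping.single (\<Sum>j\<in>S. f j) 1"
  by (induction S rule: infinite_finite_induct) (simp_all add: mult_single)

lemma perm_act_superset:
  assumes "finite S" "Poly_Mapping.keys p \<subseteq> S"
  shows "perm_act \<sigma> (p :: 'a::comm_ring_1 mpoly) =
           (\<Sum>\<alpha>\<in>S. Poly_Mapping.single (mon_perm \<sigma> \<alpha>) (Poly_Mapping.lookup p \<alpha>))"
proof -
  have "perm_act \<sigma> p = (\<Sum>\<alpha>\<in>Poly_Mapping.keys p. Poly_Mapping.single (mon_perm \<sigma> \<alpha>) (Poly_Mapping.lookup p \<alpha>))"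
    unfolding perm_act_def Var_power prod_single_one Mon_def mon_perm_def
    by (simp add: mult_single)
  also have "\<dots> = (\<Sum>\<alpha>\<in>S. Poly_Mapping.single (mon_perm \<sigma> \<alpha>) (Poly_Mapping.lookup p \<alpha>))"
    by (rule sum.mono_neutral_left) (auto simp: assms in_keys_iff)
  finally show ?thesis .
qed

lemma lookup_poly_of_coeffs:
  "finite A \<Longrightarrow> Poly_Mapping.lookup (poly_of_coeffs A c) \<alpha> = (if \<alpha> \<in> A then c \<alpha> else 0)"
  unfolding poly_of_coeffs_def Mon_def by (simp add: lookup_sum lookup_single when_def)

lemma perm_act_poly_of_coeffs:
  assumes "finite A"
  shows "perm_act \<sigma> (poly_of_coeffs A c) = (\<Sum>\<alpha>\<in>A. Poly_Mapping.single (mon_perm \<sigma> \<alpha>) (c \<alpha>))"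
  using assms by (subst perm_act_superset[of A])
    (auto simp: in_keys_iff lookup_poly_of_coeffs split: if_splits)

section \<open>Ideals generated by permutation orbits\<close>

lemma poly_vars_in_add: "poly_vars_in n p \<Longrightarrow> poly_vars_in n q \<Longrightarrow> poly_vars_in n (p + q)"
  unfolding poly_vars_in_def using keys_add[of p q] by auto

lemma poly_vars_in_mult:
  assumes "poly_vars_in n p" "poly_vars_in n q"
  shows "poly_vars_in n (p * q)"
  unfolding poly_vars_in_def
proof
  fix \<mu> assume "\<mu> \<in> Poly_Mapping.keys (p * q)"
  then obtain \<alpha> \<beta> where "\<mu> = \<alpha> + \<beta>" "\<alpha> \<in> Poly_Mapping.keys p" "\<beta> \<in> Poly_Mapping.keys q"
    using keys_mult by blast
  then show "mon_vars_in n \<mu>"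
    using assms unfolding poly_vars_in_def by (simp add: mon_vars_in_add)
qed

lemma poly_vars_in_single: "mon_vars_in n \<alpha> \<Longrightarrow> poly_vars_in n (Poly_Mapping.single \<alpha> a)"
  unfolding poly_vars_in_def by simp

lemma mon_vars_in_zero [simp]: "mon_vars_in n 0"
  by (simp add: mon_vars_in_def)

lemma poly_vars_in_zero [simp]: "poly_vars_in n 0"
  by (simp add: poly_vars_in_def)

lemma poly_vars_in_const: "poly_vars_in n (Poly_Mapping.single 0 a)"
  by (simp add: poly_vars_in_single)

lemma poly_vars_in_one [simp]: "poly_vars_in n 1"
  by (simp add: poly_vars_in_def)

lemma ideal_gen_zero: "0 \<in> ideal_gen n G"
  unfolding ideal_gen_def by (rule CollectI, rule exI[of _ "{}"]) auto

lemma ideal_gen_gen: "g \<in> G \<Longrightarrow> g \<in> ideal_gen n G"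
  unfolding ideal_gen_def
  by (rule CollectI, rule exI[of _ "{g}"], rule exI[of _ "\<lambda>_. 1"]) auto

lemma ideal_gen_add:
  assumes "p \<in> ideal_gen n G" "q \<in> ideal_gen n G"
  shows "p + q \<in> ideal_gen n G"
proof -
  obtain F1 h1 where 1: "p = (\<Sum>g\<in>F1. h1 g * g)" "finite F1" "F1 \<subseteq> G" "\<forall>g\<in>F1. poly_vars_in n (h1 g)"
    using assms(1) unfolding ideal_gen_def by blast
  obtain F2 h2 where 2: "q = (\<Sum>g\<in>F2. h2 g * g)" "finite F2" "F2 \<subseteq> G" "\<forall>g\<in>F2. poly_vars_in n (h2 g)"
    using assms(2) unfolding ideal_gen_def by blast
  define h where "h g = (if g \<in> F1 then h1 g else 0) + (if g \<in> F2 then h2 g else 0)" for g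
  have "(\<Sum>g\<in>F1 \<union> F2. h g * g) =
          (\<Sum>g\<in>F1 \<union> F2. if g \<in> F1 then h1 g * g else 0) + (\<Sum>g\<in>F1 \<union> F2. if g \<in> F2 then h2 g * g else 0)"
    unfolding sum.distrib[symmetric] by (rule sum.cong) (auto simp: h_def distrib_right)
  also have "\<dots> = p + q"
    using 1 2 by (simp add: sum.If_cases Int_absorb1 Int_absorb2)
  finally have "p + q = (\<Sum>g\<in>F1 \<union> F2. h g * g)" by simp
  moreover have "\<forall>g\<in>F1 \<union> F2. poly_vars_in n (h g)"
    using 1 2 unfolding h_def by (auto intro!: poly_vars_in_add)
  ultimately show ?thesis
    using 1 2 unfolding ideal_gen_def by (intro CollectI exI[of _ "F1 \<union> F2"] exI[of _ h]) auto
qed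

lemma ideal_gen_mult:
  assumes "p \<in> ideal_gen n G" "poly_vars_in n q"
  shows "q * p \<in> ideal_gen n G"
proof -
  obtain F h where p: "p = (\<Sum>g\<in>F. h g * g)" "finite F" "F \<subseteq> G" "\<forall>g\<in>F. poly_vars_in n (h g)"
    using assms(1) unfolding ideal_gen_def by blast
  have "q * p = (\<Sum>g\<in>F. (q * h g) * g)"
    using p(1) by (simp add: sum_distrib_left mult.assoc)
  moreover have "\<forall>g\<in>F. poly_vars_in n (q * h g)"
    using p(4) assms(2) by (auto intro: poly_vars_in_mult)
  ultimately show ?thesis
    using p unfolding ideal_gen_def by (intro CollectI exI[of _ F] exI[of _ "\<lambda>g. q * h g"]) auto
qed

lemma ideal_gen_linear_combination:
  "(\<And>k. k \<in> K \<Longrightarrow> p k \<in> ideal_gen n G) \<Longrightarrow>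
     (\<Sum>k\<in>K. Poly_Mapping.single 0 (w k) * p k) \<in> ideal_gen n G"
  by (induction K rule: infinite_finite_induct)
    (auto intro: ideal_gen_zero ideal_gen_add ideal_gen_mult poly_vars_in_const)

lemma multiple_of_orbit_element_in_ideal_gen:
  assumes "f \<in> F" "\<sigma> permutes {..<n}" "poly_vars_in n q"
  shows "q * perm_act \<sigma> f \<in> ideal_gen n (\<Union>f\<in>F. orbit n f)"
  using assms unfolding orbit_def by (blast intro: ideal_gen_mult ideal_gen_gen)

lemma radical_contains_irrelevant_if_powers_in:
  assumes "\<And>j. j < n \<Longrightarrow> Poly_Mapping.single (Poly_Mapping.single j k) 1 \<in> I"
  shows "radical_contains_irrelevant n I"
  using assms unfolding radical_contains_irrelevant_def Var_power by blast

section \<open>Linear algebra\<close>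

lemma exists_preimage_of_unit_vector:
  fixes M :: "'a::field mat"
  assumes M: "M \<in> carrier_mat N N" and "det M \<noteq> 0" "t < N"
  shows "\<exists>w. \<forall>a<N. (\<Sum>k<N. M $$ (a, k) * w k) = (if a = t then 1 else 0)"
proof (intro exI allI impI)
  fix a assume "a < N"
  have "(\<Sum>k<N. M $$ (a, k) * adj_mat M $$ (k, t)) = (M * adj_mat M) $$ (a, t)"
    using M adj_mat(1)[OF M] \<open>a < N\<close> \<open>t < N\<close> by (simp add: scalar_prod_def atLeast0LessThan)
  also have "\<dots> = (if a = t then det M else 0)"
    using adj_mat(2)[OF M] \<open>a < N\<close> \<open>t < N\<close> by simp
  finally show "(\<Sum>k<N. M $$ (a, k) * (adj_mat M $$ (k, t) / det M)) = (if a = t then 1 else 0)"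
    using \<open>det M \<noteq> 0\<close> by (simp add: sum_divide_distrib[symmetric] mult.assoc[symmetric] times_divide_eq_right)
qed

lemma lookup_const_mult:
  "Poly_Mapping.lookup (Poly_Mapping.single 0 a * p) s = (a::'a::comm_ring_1) * Poly_Mapping.lookup p s"
  unfolding mult_map_scale_conv_mult[symmetric] by transfer (simp add: when_def)

lemma single_eq_combination_if_det_nonzero:
  fixes p :: "nat \<Rightarrow> 'a::field mpoly"
  assumes "distinct ms" "\<And>k. k < length ms \<Longrightarrow> Poly_Mapping.keys (p k) \<subseteq> set ms"
    and "det (mat (length ms) (length ms) (\<lambda>(a, b). Poly_Mapping.lookup (p b) (ms ! a))) \<noteq> 0"
    and "t < length ms"
  shows "\<exists>w. Poly_Mapping.single (ms ! t) 1 = (\<Sum>k<length ms. Poly_Mapping.single 0 (w k) * p k)"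
proof -
  let ?N = "length ms"
  obtain w where w: "\<And>a. a < ?N \<Longrightarrow> (\<Sum>k<?N. Poly_Mapping.lookup (p k) (ms ! a) * w k) = (if a = t then 1 else 0)"
    using exists_preimage_of_unit_vector[OF _ assms(3,4)] by fastforce
  have "Poly_Mapping.lookup (Poly_Mapping.single (ms ! t) 1) s = (\<Sum>k<?N. w k * Poly_Mapping.lookup (p k) s)" for s
  proof (cases "s \<in> set ms")
    case True
    then obtain a where "a < ?N" "s = ms ! a" by (metis in_set_conv_nth)
    then show ?thesis
      using w[of a] assms(1,4) by (simp add: lookup_single when_def nth_eq_iff_index_eq mult.commute)
  next
    case False
    then have "Poly_Mapping.lookup (p k) s = 0" if "k < ?N" for k
      using assms(2)[OF that] by (auto simp: in_keys_iff)
    then show ?thesis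
      using False assms(4) by (auto simp: lookup_single when_def)
  qed
  then show ?thesis
    by (intro exI[of _ w] poly_mapping_eqI) (simp add: lookup_sum lookup_const_mult)
qed

section \<open>Generic invertibility\<close>

lemma lookup_translate_perm_poly_of_coeffs:
  assumes "finite A"
  shows "Poly_Mapping.lookup (Poly_Mapping.single \<beta> 1 * perm_act \<sigma> (poly_of_coeffs A c)) s =
           (\<Sum>\<alpha>\<in>A. if \<beta> + mon_perm \<sigma> \<alpha> = s then c \<alpha> else 0)"
  by (simp add: perm_act_poly_of_coeffs[OF assms] sum_distrib_left mult_single lookup_sum lookup_single when_def)

lemma keys_translate_perm_poly_of_coeffs:
  assumes "finite A"
  shows "Poly_Mapping.keys (Poly_Mapping.single \<beta> 1 * perm_act \<sigma> (poly_of_coeffs A c))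
           \<subseteq> (\<lambda>\<alpha>. \<beta> + mon_perm \<sigma> \<alpha>) ` A"
proof -
  have "Poly_Mapping.lookup (Poly_Mapping.single \<beta> 1 * perm_act \<sigma> (poly_of_coeffs A c)) s = 0"
    if "s \<notin> (\<lambda>\<alpha>. \<beta> + mon_perm \<sigma> \<alpha>) ` A" for s
    using that by (auto simp: lookup_translate_perm_poly_of_coeffs[OF assms] intro!: sum.neutral)
  then show ?thesis by (auto simp: in_keys_iff)
qed

lemma coord_poly_fun_lookup_translate_perm:
  assumes "finite A"
  shows "coord_poly_fun A (\<lambda>c. Poly_Mapping.lookup (Poly_Mapping.single \<beta> 1 * perm_act \<sigma> (poly_of_coeffs A c)) s)"
  unfolding lookup_translate_perm_poly_of_coeffs[OF assms]
  by (intro coord_poly_fun_sum coord_poly_fun_if coord_poly_fun_coord coord_poly_fun_const)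

lemma translate_perm_poly_of_coeffs_indicator:
  assumes "finite A" "\<gamma> \<in> A"
  shows "Poly_Mapping.single \<beta> 1 * perm_act \<sigma> (poly_of_coeffs A (\<lambda>\<alpha>. if \<alpha> = \<gamma> then 1 else 0)) =
           Poly_Mapping.single (\<beta> + mon_perm \<sigma> \<gamma>) (1::'a::comm_ring_1)"
  using assms by (simp add: perm_act_poly_of_coeffs mult_single if_distrib cong: if_cong)

text \<open>The \<open>p c m\<close> are the columns of a square matrix indexed by \<open>ms\<close>; its determinant is a
polynomial function of \<open>c\<close> that is 1 at \<open>e\<close>.\<close>

lemma holds_generally_singles_in_ideal:
  fixes p :: "(monom \<Rightarrow> 'a::field) \<Rightarrow> monom \<Rightarrow> 'a mpoly"
  assumes ms: "distinct ms"
    and keys: "\<And>c m. m \<in> set ms \<Longrightarrow> Poly_Mapping.keys (p c m) \<subseteq> set ms"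
    and coeffs: "\<And>m s. m \<in> set ms \<Longrightarrow> coord_poly_fun A (\<lambda>c. Poly_Mapping.lookup (p c m) s)"
    and unit: "\<And>m. m \<in> set ms \<Longrightarrow> p e m = Poly_Mapping.single m 1"
    and ideal: "\<And>c m. m \<in> set ms \<Longrightarrow> p c m \<in> ideal_gen n (G c)"
  shows "holds_generally A (\<lambda>c. \<forall>m\<in>set ms. Poly_Mapping.single m 1 \<in> ideal_gen n (G c))"
proof -
  define M where "M c = mat (length ms) (length ms) (\<lambda>(a, b). Poly_Mapping.lookup (p c (ms ! b)) (ms ! a))"
    for c
  have "coord_poly_fun A (\<lambda>c. det (M c))"
    unfolding M_def by (intro coord_poly_fun_det) (auto intro!: coeffs)
  moreover have "M e = 1\<^sub>m (length ms)"
    using ms unit unfolding M_def by (intro eq_matI) (auto simp: lookup_single nth_eq_iff_index_eq)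
  then have "det (M e) \<noteq> 0" by simp
  moreover have "\<forall>m\<in>set ms. Poly_Mapping.single m 1 \<in> ideal_gen n (G c)" if det: "det (M c) \<noteq> 0" for c
  proof
    fix m assume "m \<in> set ms"
    then obtain t where "t < length ms" "m = ms ! t"
      by (metis in_set_conv_nth)
    then obtain w where "Poly_Mapping.single m 1 = (\<Sum>k<length ms. Poly_Mapping.single 0 (w k) * p c (ms ! k))"
      using single_eq_combination_if_det_nonzero[of ms "\<lambda>k. p c (ms ! k)"] ms keys det
      unfolding M_def by fastforce
    also have "\<dots> \<in> ideal_gen n (G c)"
      by (intro ideal_gen_linear_combination ideal) simp
    finally show "Poly_Mapping.single m 1 \<in> ideal_gen n (G c)" .
  qed
  ultimately show ?thesis
    by (rule holds_generally_if_coord_poly_fun)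
qed

lemma radical_contains_irrelevant_generally:
  fixes A :: "monom set" and F :: "'a::field mpoly set"
  assumes finA: "finite A" and A: "\<forall>\<alpha>\<in>A. mon_vars_in n \<alpha> \<and> mdeg \<alpha> = d"
    and i: "i < n" "Poly_Mapping.single i d \<in> A"
  shows "holds_generally A (\<lambda>c. radical_contains_irrelevant n
           (ideal_gen n (\<Union>f\<in>insert (poly_of_coeffs A c) F. orbit n f)))"
proof -
  define D where "D = n * (d - 1) + 1"
  obtain ms where ms: "set ms = {m. mon_vars_in n m \<and> mdeg m = D}" "distinct ms"
    using finite_distinct_list[OF finite_monomials_of_degree] by blast
  have "\<forall>m\<in>set ms. \<exists>j \<beta>. j < n \<and> mon_vars_in n \<beta> \<and> m = Poly_Mapping.single j d + \<beta>"
    using exists_power_factor unfolding ms(1) D_def by auto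
  then obtain jj uu where split: "\<And>m. m \<in> set ms \<Longrightarrow>
      jj m < n \<and> mon_vars_in n (uu m) \<and> m = Poly_Mapping.single (jj m) d + uu m"
    by metis
  define \<sigma> where "\<sigma> m = transpose i (jj m)" for m
  have \<sigma>: "\<sigma> m permutes {..<n}" if "m \<in> set ms" for m
    unfolding \<sigma>_def using split[OF that] i by (intro permutes_swap_id) auto
  let ?e = "\<lambda>\<alpha>. if \<alpha> = Poly_Mapping.single i d then 1 else 0 :: 'a"
  have "holds_generally A (\<lambda>c. \<forall>m\<in>set ms. Poly_Mapping.single m 1 \<in>
          ideal_gen n (\<Union>f\<in>insert (poly_of_coeffs A c) F. orbit n f))"
  proof (rule holds_generally_singles_in_ideal[OF ms(2), where e = ?e and
        p = "\<lambda>c m. Poly_Mapping.single (uu m) 1 * perm_act (\<sigma> m) (poly_of_coeffs A c)"])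
    fix c :: "monom \<Rightarrow> 'a" and m assume m: "m \<in> set ms"
    then have "mdeg (uu m) + d = D"
      using split[OF m] ms(1) by (metis (mono_tags) mem_Collect_eq mdeg_add mdeg_single add.commute)
    then have "uu m + mon_perm (\<sigma> m) \<alpha> \<in> set ms" if "\<alpha> \<in> A" for \<alpha>
      using split[OF m] A that \<sigma>[OF m]
      unfolding ms(1) by (auto simp: mdeg_add mon_vars_in_add mon_vars_in_mon_perm)
    then show "Poly_Mapping.keys (Poly_Mapping.single (uu m) 1 * perm_act (\<sigma> m) (poly_of_coeffs A c)) \<subseteq> set ms"
      using keys_translate_perm_poly_of_coeffs[OF finA] by blast
    show "Poly_Mapping.single (uu m) 1 * perm_act (\<sigma> m) (poly_of_coeffs A c)
            \<in> ideal_gen n (\<Union>f\<in>insert (poly_of_coeffs A c) F. orbit n f)"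
      using split[OF m] \<sigma>[OF m]
      by (intro multiple_of_orbit_element_in_ideal_gen poly_vars_in_single) auto
  next
    fix m assume "m \<in> set ms"
    then show "Poly_Mapping.single (uu m) 1 * perm_act (\<sigma> m) (poly_of_coeffs A ?e) = Poly_Mapping.single m 1"
      unfolding \<sigma>_def translate_perm_poly_of_coeffs_indicator[OF finA i(2)]
      using split by (simp add: add.commute)
  qed (rule coord_poly_fun_lookup_translate_perm[OF finA])
  then show ?thesis
    by (rule holds_generally_mono)
      (auto intro!: radical_contains_irrelevant_if_powers_in[where k = D] simp: ms(1) mon_vars_in_def)
qed

theorem corollary1p3:
  fixes n d :: nat
    and A :: "monom set"
    and fs :: "'a::field mpoly list"
  assumes "infinite (UNIV :: 'a set)"
    and "d \<ge> 1"
    and "finite A"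
    and "\<forall>\<alpha>\<in>A. mon_vars_in n \<alpha> \<and> mdeg \<alpha> = d"
    and "\<exists>i<n. Poly_Mapping.single i d \<in> A"
    and "\<forall>f\<in>set fs. poly_vars_in n f \<and> (\<exists>e. homogeneous e f)"
  shows "holds_generally A (\<lambda>c :: monom \<Rightarrow> 'a.
           radical_contains_irrelevant n
             (ideal_gen n (\<Union>f\<in>set (poly_of_coeffs A c # fs). orbit n f)))"
proof -
  obtain i where "i < n" "Poly_Mapping.single i d \<in> A"
    using assms(5) by blast
  from radical_contains_irrelevant_generally[OF assms(3,4) this, of "set fs"]
  show ?thesis by simp
qed

end
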